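(* Consider the ordered streaming model for trees without vertex moves (defined in the context). For every drawing algorithm in this model there exist a tree with $n$ edges and an order of arrival of its edges (together with the rotation information) for which the algorithm's drawing requires area $\Omega(2^{n/2})$.
   Context: Ordered streaming model: a connected graph $G$ (here a tree) is revealed one edge at a time; at all times the revealed graph is connected and edges never disappear. Together with each new edge $e$ the algorithm is told the position of $e$ in the clockwise cyclic order of the edges incident to each of its endpoints (among the edges incident to that endpoint). Upon arrival, $e$ must immediately be incorporated into a planar straight-line drawing of the current graph in which every vertex is placed at a grid point (integer coordinates), consistent with the given clockwise orders. "Without vertex moves" means that once a vertex has been placed, its position never changes. The area of a drawing is the area of the smallest axis-parallel bounding box of the grid points used. *)

theory Defs
  imports "HOL-Analysis.Analysis"
begin

(* Input encoding (canonical vertex names = order of appearance).  Item k (k = 0,1,...) is the k-th arriving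
   edge; it joins the already present vertex p (p \<le> k) with the new vertex k+1
   (edge 0 joins vertices 0 and 1).  r is the position of the new edge in the
   clockwise cyclic order at p: the clockwise order at each vertex is recorded as
   a list starting with its oldest incident edge, and the new edge is inserted at
   list index r, 1 \<le> r \<le> deg(p)  (r = 0 iff p had no edge yet, i.e. k = 0). *)

fun rot_aux :: "nat \<Rightarrow> (nat \<times> nat) list \<Rightarrow> (nat \<Rightarrow> nat list) \<Rightarrow> (nat \<Rightarrow> nat list)" where
  "rot_aux k [] R = R"
| "rot_aux k ((p, r) # s) R =
     rot_aux (Suc k) s
       (R(p := take r (R p) @ [Suc k] @ drop r (R p), Suc k := [p]))"

definition rotation :: "(nat \<times> nat) list \<Rightarrow> nat \<Rightarrow> nat list" where
  "rotation s = rot_aux 0 s (\<lambda>_. [])"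

definition valid_stream :: "(nat \<times> nat) list \<Rightarrow> bool" where
  "valid_stream s \<longleftrightarrow>
     (\<forall>k < length s.
        fst (s ! k) \<le> k \<and>
        (let d = length (rotation (take k s) (fst (s ! k)))
         in if d = 0 then snd (s ! k) = 0 else 1 \<le> snd (s ! k) \<and> snd (s ! k) \<le> d))"

definition tree_verts :: "(nat \<times> nat) list \<Rightarrow> nat set" where
  "tree_verts s = {0 .. length s}"

definition tree_edges :: "(nat \<times> nat) list \<Rightarrow> (nat \<times> nat) set" where
  "tree_edges s = {(fst (s ! k), Suc k) | k. k < length s}"

definition pt :: "int \<times> int \<Rightarrow> complex" where
  "pt q = Complex (of_int (fst q)) (of_int (snd q))"

(* clockwise angle (in [0, 2 pi)) from direction a to direction b *)
definition cw_angle :: "complex \<Rightarrow> complex \<Rightarrow> real" where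
  "cw_angle a b = Arg2pi (a / b)"

definition seg :: "(nat \<Rightarrow> int \<times> int) \<Rightarrow> nat \<times> nat \<Rightarrow> complex set" where
  "seg P e = closed_segment (pt (P (fst e))) (pt (P (snd e)))"

definition good_drawing :: "(nat \<times> nat) list \<Rightarrow> (nat \<Rightarrow> int \<times> int) \<Rightarrow> bool" where
  "good_drawing s P \<longleftrightarrow>
     inj_on P (tree_verts s) \<and>
     (\<forall>e \<in> tree_edges s. \<forall>f \<in> tree_edges s. e \<noteq> f \<longrightarrow>
        seg P e \<inter> seg P f \<subseteq> (\<lambda>v. pt (P v)) ` ({fst e, snd e} \<inter> {fst f, snd f})) \<and>
     (\<forall>e \<in> tree_edges s. \<forall>w \<in> tree_verts s. w \<notin> {fst e, snd e} \<longrightarrow>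
        pt (P w) \<notin> seg P e) \<and>
     (\<forall>v \<in> tree_verts s.
        let ns = rotation s v;
            dir = (\<lambda>w. pt (P w) - pt (P v))
        in sorted_wrt (<) (map (\<lambda>w. cw_angle (dir (hd ns)) (dir w)) ns))"

(* An algorithm A places vertex v at A (first v items): vertex 0 at A [], vertex k+1
   at the moment item k arrives, knowing only items 0..k.  Positions never change. *)
definition placement :: "((nat \<times> nat) list \<Rightarrow> int \<times> int) \<Rightarrow> (nat \<times> nat) list \<Rightarrow> nat \<Rightarrow> int \<times> int" where
  "placement A s v = A (take v s)"

definition streaming_algorithm :: "((nat \<times> nat) list \<Rightarrow> int \<times> int) \<Rightarrow> bool" where
  "streaming_algorithm A \<longleftrightarrow>
     (\<forall>s. valid_stream s \<longrightarrow> good_drawing s (placement A s))"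

definition drawing_area :: "(nat \<times> nat) list \<Rightarrow> (nat \<Rightarrow> int \<times> int) \<Rightarrow> int" where
  "drawing_area s P =
     (let X = (\<lambda>v. fst (P v)) ` tree_verts s; Y = (\<lambda>v. snd (P v)) ` tree_verts s
      in (Max X - Min X) * (Max Y - Min Y))"

end

theory Submission
  imports Defs
begin

text \<open>The adversary only ever builds a star centred at vertex 0, always inserting the new
leaf next to the newest one in the rotation at 0. The newest leaf lies in a wedge bounded
by its two rotation neighbours; the adversary sees where the algorithm put it and inserts
the next leaf on the narrower side, so the wedge at least halves with each edge and after
\<open>n\<close> edges two leaves \<open>u, v\<close> span an angle \<open>\<theta> = O(2\<^sup>-\<^sup>n)\<close> at the centre.
Since the drawing is on the grid, the cross product of \<open>u - 0\<close> and \<open>v - 0\<close> is a positive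
integer, so \<open>1 \<le> |u| |v| sin \<theta> \<le> |u| |v| \<theta>\<close>. Both lengths are at most \<open>W + H \<le> 2 W H\<close>
for the bounding box \<open>W \<times> H\<close>, whence \<open>W H = \<Omega>(2\<^sup>n\<^sup>/\<^sup>2)\<close>.\<close>

lemma rot_aux_snoc:
  "rot_aux k (s @ [(p, r)]) R =
     (let R' = rot_aux k s R in
        R'(p := take r (R' p) @ [Suc (k + length s)] @ drop r (R' p), Suc (k + length s) := [p]))"
  by (induction s arbitrary: k R) (auto simp: Let_def)

lemma rotation_snoc:
  "rotation (s @ [(p, r)]) =
     (let R' = rotation s in
        R'(p := take r (R' p) @ [Suc (length s)] @ drop r (R' p), Suc (length s) := [p]))"
  unfolding rotation_def by (simp add: rot_aux_snoc)

lemma rotation_snoc_centre: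
  "rotation (s @ [(0, i)]) 0 = take i (rotation s 0) @ Suc (length s) # drop i (rotation s 0)"
  by (simp add: rotation_snoc Let_def)

lemma valid_stream_snoc:
  assumes "valid_stream s" "p \<le> length s"
    and "let d = length (rotation s p) in if d = 0 then r = 0 else 1 \<le> r \<and> r \<le> d"
  shows "valid_stream (s @ [(p, r)])"
  using assms unfolding valid_stream_def
  by (auto simp: nth_append less_Suc_eq Let_def split: if_splits)

definition star_stream :: "(nat \<times> nat) list \<Rightarrow> bool" where
  "star_stream s \<longleftrightarrow> (\<forall>k < length s. fst (s ! k) = 0)"

lemma star_stream_snoc: "star_stream (s @ [(0, i)]) \<longleftrightarrow> star_stream s"
  unfolding star_stream_def by (auto simp: nth_append less_Suc_eq)

lemma star_stream_rotation_centre: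
  assumes "star_stream s"
  shows "length (rotation s 0) = length s \<and> set (rotation s 0) \<subseteq> {1..length s}"
  using assms
proof (induction s rule: rev_induct)
  case Nil
  then show ?case by (simp add: rotation_def)
next
  case (snoc x s)
  obtain i where x: "x = (0, i)"
    using snoc.prems unfolding star_stream_def by (cases x) (auto simp: nth_append)
  then have "star_stream s" using snoc.prems star_stream_snoc by simp
  with snoc.IH have "length (rotation s 0) = length s" "set (rotation s 0) \<subseteq> {1..length s}"
    by auto
  moreover have "set (take i (rotation s 0)) \<union> set (drop i (rotation s 0)) = set (rotation s 0)"
    by (metis append_take_drop_id set_append)
  ultimately show ?case by (auto simp: x rotation_snoc_centre)
qed

lemma placement_append: "v \<le> length s \<Longrightarrow> placement A (s @ t) v = placement A s v"
  unfolding placement_def by simp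

definition centre_angle :: "((nat \<times> nat) list \<Rightarrow> int \<times> int) \<Rightarrow> (nat \<times> nat) list \<Rightarrow> nat \<Rightarrow> real" where
  "centre_angle A s v = cw_angle (pt (placement A s 1) - pt (placement A s 0))
                                 (pt (placement A s v) - pt (placement A s 0))"

lemma centre_angle_append:
  "v \<le> length s \<Longrightarrow> 1 \<le> length s \<Longrightarrow> centre_angle A (s @ t) v = centre_angle A s v"
  unfolding centre_angle_def by (simp add: placement_append)

definition angle_before :: "((nat \<times> nat) list \<Rightarrow> int \<times> int) \<Rightarrow> (nat \<times> nat) list \<Rightarrow> nat \<Rightarrow> real" where
  "angle_before A s r = centre_angle A s (rotation s 0 ! (r - 1))"

text \<open>The clockwise successor of the last leaf in the rotation at 0 is leaf 1 again, seen
at angle \<open>2 \<pi>\<close>.\<close>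

definition angle_after :: "((nat \<times> nat) list \<Rightarrow> int \<times> int) \<Rightarrow> (nat \<times> nat) list \<Rightarrow> nat \<Rightarrow> real" where
  "angle_after A s r =
     (if Suc r < length s then centre_angle A s (rotation s 0 ! Suc r) else 2 * pi)"

lemma wedge_after_insertion:
  assumes "star_stream s" "1 \<le> i" "i \<le> length s"
  shows "angle_before A (s @ [(0, i)]) i = centre_angle A s (rotation s 0 ! (i - 1))"
    and "angle_after A (s @ [(0, i)]) i =
           (if i < length s then centre_angle A s (rotation s 0 ! i) else 2 * pi)"
proof -
  let ?ns = "rotation s 0"
  have len: "length ?ns = length s" and set: "set ?ns \<subseteq> {1..length s}"
    using star_stream_rotation_centre[OF assms(1)] by auto
  have old: "?ns ! j \<le> length s" if "j < length s" for j
    using set len that by (metis atLeastAtMost_iff nth_mem subsetD)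
  show "angle_before A (s @ [(0, i)]) i = centre_angle A s (?ns ! (i - 1))"
    using assms len old[of "i - 1"]
    by (simp add: angle_before_def rotation_snoc_centre nth_append centre_angle_append)
  show "angle_after A (s @ [(0, i)]) i =
          (if i < length s then centre_angle A s (?ns ! i) else 2 * pi)"
    using assms len old[of i]
    by (simp add: angle_after_def rotation_snoc_centre nth_append centre_angle_append)
qed

definition wedge_invariant :: "((nat \<times> nat) list \<Rightarrow> int \<times> int) \<Rightarrow> (nat \<times> nat) list \<Rightarrow> nat \<Rightarrow> bool" where
  "wedge_invariant A s r \<longleftrightarrow>
     valid_stream s \<and> star_stream s \<and> 2 \<le> length s \<and> 1 \<le> r \<and> r < length s \<and>
     rotation s 0 ! 0 = 1 \<and> rotation s 0 ! r = length s \<and>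
     angle_after A s r - angle_before A s r \<le> 2 * pi / 2 ^ (length s - 2)"

lemma wedge_invariant_init: "wedge_invariant A [(0, 0), (0, 1)] 1"
proof -
  have rot: "rotation [(0, 0), (0, 1)] 0 = [1, 2]" by (simp add: rotation_def)
  have "valid_stream [(0, 0), (0, 1)]"
    unfolding valid_stream_def by (auto simp: less_Suc_eq rotation_def)
  moreover have "angle_before A [(0, 0), (0, 1)] 1 = 0"
    unfolding angle_before_def centre_angle_def cw_angle_def rot
    by (cases "pt (placement A [(0, 0), (0, 1)] 1) = pt (placement A [(0, 0), (0, 1)] 0)")
      (auto simp: Arg2pi_of_real[of 1, simplified])
  ultimately show ?thesis
    by (simp add: wedge_invariant_def angle_after_def star_stream_def rot[simplified] less_Suc_eq)
qed

lemma wedge_invariant_extend: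
  assumes "wedge_invariant A s r"
  shows "\<exists>i. wedge_invariant A (s @ [(0, i)]) i"
proof -
  let ?ns = "rotation s 0"
  define lo where "lo = angle_before A s r"
  define mid where "mid = centre_angle A s (length s)"
  define hi where "hi = angle_after A s r"
  define i where "i = (if 2 * (mid - lo) \<le> hi - lo then r else Suc r)"
  have star: "star_stream s" and r: "1 \<le> r" "r < length s"
    and first: "?ns ! 0 = 1" and newest: "?ns ! r = length s"
    and wedge: "hi - lo \<le> 2 * pi / 2 ^ (length s - 2)"
    using assms unfolding wedge_invariant_def lo_def hi_def by auto
  have len: "length ?ns = length s"
    using star_stream_rotation_centre[OF star] by simp
  have i: "1 \<le> i" "i \<le> length s" using r unfolding i_def by auto
  have "angle_after A (s @ [(0, i)]) i - angle_before A (s @ [(0, i)]) i \<le> (hi - lo) / 2"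
    using wedge_after_insertion[OF star i, of A] r newest
    unfolding i_def lo_def mid_def hi_def angle_before_def angle_after_def by auto
  also have "\<dots> \<le> (2 * pi / 2 ^ (length s - 2)) / 2"
    using wedge by (intro divide_right_mono) auto
  also have "\<dots> = 2 * pi / 2 ^ (length (s @ [(0, i)]) - 2)"
  proof -
    have "length (s @ [(0, i)]) - 2 = Suc (length s - 2)" using r by simp
    then show ?thesis by simp
  qed
  finally have "wedge_invariant A (s @ [(0, i)]) i"
    using assms i len first
    by (auto simp: wedge_invariant_def star_stream_snoc rotation_snoc_centre nth_append
        intro!: valid_stream_snoc)
  then show ?thesis ..
qed

lemma wedge_invariant_exists: "2 \<le> n \<Longrightarrow> \<exists>s r. wedge_invariant A s r \<and> length s = n"
proof (induction n rule: dec_induct)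
  case base
  show ?case using wedge_invariant_init by fastforce
next
  case (step n)
  then show ?case using wedge_invariant_extend by fastforce
qed

lemma wedge_angles_strict:
  assumes "wedge_invariant A s r" "good_drawing s (placement A s)"
  shows "angle_before A s r < centre_angle A s (length s)"
    and "centre_angle A s (length s) < angle_after A s r"
proof -
  let ?ns = "rotation s 0"
  have star: "star_stream s" and r: "1 \<le> r" "r < length s"
    and first: "?ns ! 0 = 1" and newest: "?ns ! r = length s"
    using assms(1) unfolding wedge_invariant_def by auto
  have len: "length ?ns = length s"
    using star_stream_rotation_centre[OF star] by simp
  then have "hd ?ns = 1" using first r by (cases ?ns) auto
  moreover have "sorted_wrt (<) (map (\<lambda>w. cw_angle (pt (placement A s (hd ?ns)) - pt (placement A s 0))
                                         (pt (placement A s w) - pt (placement A s 0))) ?ns)"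
    using assms(2) unfolding good_drawing_def tree_verts_def Let_def by auto
  ultimately have "sorted_wrt (<) (map (centre_angle A s) ?ns)"
    by (simp add: centre_angle_def[abs_def])
  then have mono: "centre_angle A s (?ns ! i) < centre_angle A s (?ns ! j)"
    if "i < j" "j < length s" for i j
    using that len by (auto simp: sorted_wrt_iff_nth_less)
  show "angle_before A s r < centre_angle A s (length s)"
    using mono[of "r - 1" r] r newest by (simp add: angle_before_def)
  show "centre_angle A s (length s) < angle_after A s r"
    using mono[of r "Suc r"] newest Arg2pi_lt_2pi
    by (simp add: angle_after_def centre_angle_def cw_angle_def)
qed

lemma Im_mult_cnj_eq_sin_Arg2pi_diff:
  fixes a b h :: complex
  assumes "a \<noteq> 0" "b \<noteq> 0" "h \<noteq> 0" "Arg2pi (h / a) \<le> Arg2pi (h / b)"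
  shows "Im (a * cnj b) = cmod a * cmod b * sin (Arg2pi (h / b) - Arg2pi (h / a))"
proof -
  have "Arg2pi ((h / b) / (h / a)) = Arg2pi (h / b) - Arg2pi (h / a)"
    using assms by (intro Arg2pi_divide) auto
  moreover have "(h / b) / (h / a) = a / b" using assms by (simp add: field_simps)
  ultimately have arg: "Arg2pi (a / b) = Arg2pi (h / b) - Arg2pi (h / a)" by simp
  have Im_scale: "Im (z * of_real c) = Im z * c" for z c by simp
  have "a * cnj b = (a / b) * (b * cnj b)" using assms(2) by simp
  also have "\<dots> = (a / b) * of_real ((cmod b)\<^sup>2)" by (simp only: complex_norm_square)
  finally have "Im (a * cnj b) = Im (a / b) * (cmod b)\<^sup>2" by (simp only: Im_scale)
  also have "Im (a / b) = cmod (a / b) * sin (Arg2pi (a / b))" by (simp add: sin_Arg2pi)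
  finally show ?thesis using assms(2) unfolding arg by (simp add: norm_divide power2_eq_square)
qed

lemma two_powr_half_le:
  fixes X :: real
  assumes "0 \<le> X" "2 ^ n \<le> 256 * X\<^sup>2"
  shows "1/16 * 2 powr (real n / 2) \<le> X"
proof (rule power2_le_imp_le)
  have "(2 powr (real n / 2))\<^sup>2 = 2 ^ n"
    by (simp add: power2_eq_square powr_add[symmetric] powr_realpow)
  then have "(1/16 * 2 powr (real n / 2))\<^sup>2 = 2 ^ n / 256"
    by (simp add: power_divide)
  then show "(1/16 * 2 powr (real n / 2))\<^sup>2 \<le> X\<^sup>2" using assms(2) by simp
qed (rule assms(1))

lemma lattice_wedge_area:
  fixes a b h :: complex and W H :: int and n :: nat
  defines "\<theta> \<equiv> Arg2pi (h / b) - Arg2pi (h / a)"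
  assumes lattice: "Re a \<in> \<int>" "Im a \<in> \<int>" "Re b \<in> \<int>" "Im b \<in> \<int>"
    and nonzero: "a \<noteq> 0" "b \<noteq> 0" "h \<noteq> 0"
    and box: "\<bar>Re a\<bar> \<le> W" "\<bar>Re b\<bar> \<le> W" "\<bar>Im a\<bar> \<le> H" "\<bar>Im b\<bar> \<le> H"
    and angle: "0 < \<theta>" "\<theta> < pi" "\<theta> \<le> 8 * pi / 2 ^ n"
  shows "1/16 * 2 powr (real n / 2) \<le> W * H"
proof -
  have cross: "Im (a * cnj b) = cmod a * cmod b * sin \<theta>"
    using Im_mult_cnj_eq_sin_Arg2pi_diff[OF nonzero] angle(1) unfolding \<theta>_def by simp
  have "0 < Im (a * cnj b)"
    unfolding cross using nonzero angle by (simp add: sin_gt_zero)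
  moreover have "Im (a * cnj b) \<in> \<int>" using lattice by simp
  ultimately have "1 \<le> Im (a * cnj b)" using Ints_nonzero_abs_ge1 by fastforce
  also have "\<dots> \<le> cmod a * cmod b * \<theta>"
    unfolding cross using angle(1) sin_x_le_x by (intro mult_left_mono) auto
  also have "\<dots> \<le> cmod a * cmod b * (8 * pi / 2 ^ n)"
    using angle(3) by (intro mult_left_mono) auto
  finally have norms: "2 ^ n \<le> 8 * pi * (cmod a * cmod b)" by (simp add: field_simps)
  have "Re a \<noteq> 0 \<or> Re b \<noteq> 0" "Im a \<noteq> 0 \<or> Im b \<noteq> 0"
    using \<open>1 \<le> Im (a * cnj b)\<close> by auto
  then have "1 \<le> \<bar>Re a\<bar> \<or> 1 \<le> \<bar>Re b\<bar>" "1 \<le> \<bar>Im a\<bar> \<or> 1 \<le> \<bar>Im b\<bar>"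
    using lattice Ints_nonzero_abs_ge1 by blast+
  then have W: "1 \<le> W" and H: "1 \<le> H" using box by linarith+
  then have "W \<le> W * H" "H \<le> W * H"
    by (simp_all add: mult_le_cancel_left1 mult_le_cancel_right1)
  then have "cmod a \<le> 2 * of_int (W * H)" "cmod b \<le> 2 * of_int (W * H)"
    using cmod_le[of a] cmod_le[of b] box by linarith+
  then have "cmod a * cmod b \<le> 4 * (real_of_int (W * H))\<^sup>2"
    using W H mult_mono[of "cmod a" "2 * of_int (W * H)" "cmod b" "2 * of_int (W * H)"]
    by (simp add: power2_eq_square)
  moreover have "8 * pi * (cmod a * cmod b) \<le> 32 * (cmod a * cmod b)"
    using pi_less_4 by (intro mult_right_mono) auto
  ultimately have "2 ^ n \<le> 256 * (real_of_int (W * H))\<^sup>2"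
    using norms zero_le_power2[of "real_of_int (W * H)"] by linarith
  then show ?thesis using W H by (intro two_powr_half_le) auto
qed

lemma abs_diff_le_Max_minus_Min:
  fixes f :: "'a \<Rightarrow> int"
  assumes "finite V" "u \<in> V" "v \<in> V"
  shows "\<bar>f u - f v\<bar> \<le> Max (f ` V) - Min (f ` V)"
proof -
  have "f u \<le> Max (f ` V)" "f v \<le> Max (f ` V)" "Min (f ` V) \<le> f u" "Min (f ` V) \<le> f v"
    using assms by auto
  then show ?thesis by linarith
qed

lemma pt_diff: "pt p - pt q = Complex (of_int (fst p - fst q)) (of_int (snd p - snd q))"
  by (simp add: pt_def complex_eq_iff)

lemma drawing_area_ge_of_narrow_angle:
  fixes P :: "nat \<Rightarrow> int \<times> int" and c u v w :: nat
  defines "dir x \<equiv> pt (P x) - pt (P c)"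
  defines "\<theta> \<equiv> cw_angle (dir w) (dir v) - cw_angle (dir w) (dir u)"
  assumes inj: "inj_on P (tree_verts s)"
    and verts: "c \<in> tree_verts s" "u \<in> tree_verts s" "v \<in> tree_verts s" "w \<in> tree_verts s"
    and distinct: "u \<noteq> c" "v \<noteq> c" "w \<noteq> c"
    and angle: "0 < \<theta>" "\<theta> < pi" "\<theta> \<le> 8 * pi / 2 ^ n"
  shows "1/16 * 2 powr (real n / 2) \<le> real_of_int (drawing_area s P)"
proof -
  define W where "W = Max ((\<lambda>x. fst (P x)) ` tree_verts s) - Min ((\<lambda>x. fst (P x)) ` tree_verts s)"
  define H where "H = Max ((\<lambda>x. snd (P x)) ` tree_verts s) - Min ((\<lambda>x. snd (P x)) ` tree_verts s)"
  have fin: "finite (tree_verts s)" by (simp add: tree_verts_def)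
  have nonzero: "dir x \<noteq> 0" if "x \<in> tree_verts s" "x \<noteq> c" for x
  proof -
    have "P x \<noteq> P c" using inj_onD[OF inj, of x c] that verts(1) by auto
    then show ?thesis unfolding dir_def pt_diff by (simp add: complex_eq_iff prod_eq_iff)
  qed
  have box: "\<bar>Re (dir x)\<bar> \<le> W" "\<bar>Im (dir x)\<bar> \<le> H" if "x \<in> tree_verts s" for x
  proof -
    have "\<bar>fst (P x) - fst (P c)\<bar> \<le> W" "\<bar>snd (P x) - snd (P c)\<bar> \<le> H"
      unfolding W_def H_def by (intro abs_diff_le_Max_minus_Min fin that verts(1))+
    then show "\<bar>Re (dir x)\<bar> \<le> W" "\<bar>Im (dir x)\<bar> \<le> H"
      unfolding dir_def pt_diff by (simp_all flip: of_int_abs)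
  qed
  have lattice: "Re (dir x) \<in> \<int>" "Im (dir x) \<in> \<int>" for x
    by (simp_all add: dir_def pt_diff)
  have "1/16 * 2 powr (real n / 2) \<le> W * H"
    by (rule lattice_wedge_area[of "dir u" "dir v" "dir w"])
      (use lattice nonzero box verts distinct angle[unfolded \<theta>_def cw_angle_def] in auto)
  then show ?thesis by (simp add: drawing_area_def W_def H_def Let_def)
qed

lemma wedge_angle_narrow:
  assumes inv: "wedge_invariant A s r" and good: "good_drawing s (placement A s)"
    and n: "4 \<le> length s"
  defines "\<theta> \<equiv> centre_angle A s (length s) - angle_before A s r"
  shows "0 < \<theta>" "\<theta> < pi" "\<theta> \<le> 8 * pi / 2 ^ length s"
proof -
  have "length s = (length s - 2) + 2" using n by simp
  then have "(2::real) ^ length s = 2 ^ (length s - 2) * 2 ^ 2" by (metis power_add)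
  then have "2 * pi / 2 ^ (length s - 2) = 8 * pi / 2 ^ length s" by simp
  moreover have "8 * pi / 2 ^ length s \<le> 8 * pi / 2 ^ 4"
    using n pi_gt_zero by (intro divide_left_mono power_increasing) auto
  moreover have "angle_after A s r - angle_before A s r \<le> 2 * pi / 2 ^ (length s - 2)"
    using inv by (simp add: wedge_invariant_def)
  ultimately show "0 < \<theta>" "\<theta> < pi" "\<theta> \<le> 8 * pi / 2 ^ length s"
    using wedge_angles_strict[OF inv good] pi_gt_zero unfolding \<theta>_def by auto
qed

lemma drawing_area_ge_of_wedge_invariant:
  assumes inv: "wedge_invariant A s r" and good: "good_drawing s (placement A s)"
    and n: "4 \<le> length s"
  shows "1/16 * 2 powr (real (length s) / 2) \<le> real_of_int (drawing_area s (placement A s))"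
proof -
  define L where "L = rotation s 0 ! (r - 1)"
  have star: "star_stream s" and r: "1 \<le> r" "r < length s"
    using inv by (auto simp: wedge_invariant_def)
  have len: "length (rotation s 0) = length s" and set: "set (rotation s 0) \<subseteq> {1..length s}"
    using star_stream_rotation_centre[OF star] by auto
  have "L \<in> {1..length s}"
    unfolding L_def using r len by (intro subsetD[OF set nth_mem]) auto
  moreover have "inj_on (placement A s) (tree_verts s)"
    using good by (simp add: good_drawing_def)
  ultimately show ?thesis
    using wedge_angle_narrow[OF inv good n] n
    unfolding angle_before_def centre_angle_def L_def[symmetric]
    by (intro drawing_area_ge_of_narrow_angle[where c = 0 and w = 1]) (auto simp: tree_verts_def)
qed

theorem theorem1:
  fixes A :: "(nat \<times> nat) list \<Rightarrow> int \<times> int"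
  assumes "streaming_algorithm A"
  shows "\<exists>c > 0. \<exists>N. \<forall>n \<ge> N. \<exists>s. valid_stream s \<and> length s = n \<and>
           real_of_int (drawing_area s (placement A s)) \<ge> c * 2 powr (real n / 2)"
proof (intro exI[of _ "1/16"] conjI exI[of _ 4] allI impI)
  fix n :: nat assume n: "4 \<le> n"
  then obtain s r where inv: "wedge_invariant A s r" and len: "length s = n"
    using wedge_invariant_exists[of n A] by auto
  then have "valid_stream s" by (simp add: wedge_invariant_def)
  moreover have "good_drawing s (placement A s)"
    using assms calculation by (simp add: streaming_algorithm_def)
  ultimately show "\<exists>s. valid_stream s \<and> length s = n \<and>
      1/16 * 2 powr (real n / 2) \<le> real_of_int (drawing_area s (placement A s))"
    using drawing_area_ge_of_wedge_invariant[OF inv] n len by auto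
qed simp

end
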